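(* Let $n\ge 1$, $d_1,\dots,d_n\ge 1$, $L_i\in\mathbb{C}^{d_i\times d_i}$ ($i=1,\dots,n$) and $C_{i,i-1}\in\mathbb{C}^{d_i\times d_{i-1}}$ ($i=2,\dots,n$). Assume: (i) each $L_i$ is invertible and diagonalizable, $L_iV_i=V_i\Lambda_i$ with $V_i$ invertible and $\Lambda_i=\mathrm{diag}(\lambda_{i,1},\dots,\lambda_{i,d_i})$; (ii) $\sigma(L_i)\cap\sigma(L_j)=\emptyset$ for all $i\neq j$; (iii) $\|L_1\|<\|L_2\|<\cdots<\|L_n\|\le 1$. Fix $i\in\{1,\dots,n\}$ and $s_i\in\{1,\dots,d_i\}$. Then $\Psi_{i,s_i}\circ\mathsf{pert}$ is an eigenfunction of the Koopman operator $\mathcal U_{\mathsf{Lin}}$ (defined by $\mathcal U_{\mathsf{Lin}}f=f\circ\mathsf{Lin}$) at eigenvalue $\lambda_{i,s_i}$, i.e. $\Psi_{i,s_i}(\mathsf{pert}(\mathsf{Lin}(x)))=\lambda_{i,s_i}\Psi_{i,s_i}(\mathsf{pert}(x))$ for all $x\in\mathbb{C}^{d_1}\times\cdots\times\mathbb{C}^{d_n}$.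
   Context: Each $\mathbb{C}^{d_i}$ carries a fixed norm, matrices carry the induced operator norm. $\mathsf{Lin}(x_1,\dots,x_n)=(L_1x_1,\;L_2x_2+C_{2,1}x_1,\;\dots,\;L_nx_n+C_{n,n-1}x_{n-1})$. The principal eigenfunction $\psi_{i,s}(x_i)=\hat e_s^{*}V_i^{-1}x_i$ ($\hat e_s$ the $s$-th standard basis vector of $\mathbb{C}^{d_i}$), and $\Psi_{i,s}(x_1,\dots,x_n)=\psi_{i,s}(x_i)$. Matrices $D_{i,j}$ ($1\le j\le i\le n$) are defined recursively in $i$: $D_{i,i}=I_{d_i}$; for $i\ge 2$, $1\le j\le i-1$, $[\tilde C_{i,j}]_{\ell,m}=[V_i^{-1}C_{i,i-1}D_{i-1,j}V_j]_{\ell,m}(1-\lambda_{j,m}/\lambda_{i,\ell})^{-1}$ and $D_{i,j}=L_i^{-1}V_i\tilde C_{i,j}V_j^{-1}$. Define $\mathsf{pert}_1(x_1)=x_1$, $\mathsf{pert}_i(x_1,\dots,x_i)=x_i+\sum_{j=1}^{i-1}(-1)^{i-1-j}D_{i,j}\mathsf{pert}_j(x_1,\dots,x_j)$ for $i\ge2$, and $\mathsf{pert}(x)=(\mathsf{pert}_1(x_1),\dots,\mathsf{pert}_n(x_1,\dots,x_n))$. *)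

theory Defs
  imports "Jordan_Normal_Form.Spectral_Radius" "Jordan_Normal_Form.Gauss_Jordan_Elimination"
begin

text \<open>Matrix inverse (library Gauss-Jordan inverse; meaningful for invertible square matrices).\<close>
definition inv_m :: "complex mat \<Rightarrow> complex mat" where
  "inv_m A = the (mat_inverse A)"

definition is_vec_norm :: "nat \<Rightarrow> (complex vec \<Rightarrow> real) \<Rightarrow> bool" where
  "is_vec_norm d N \<longleftrightarrow>
     (\<forall>x \<in> carrier_vec d. N x \<ge> 0 \<and> (N x = 0 \<longleftrightarrow> x = 0\<^sub>v d)) \<and>
     (\<forall>x \<in> carrier_vec d. \<forall>c. N (c \<cdot>\<^sub>v x) = cmod c * N x) \<and>
     (\<forall>x \<in> carrier_vec d. \<forall>y \<in> carrier_vec d. N (x + y) \<le> N x + N y)"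

definition op_norm :: "nat \<Rightarrow> (complex vec \<Rightarrow> real) \<Rightarrow> complex mat \<Rightarrow> real" where
  "op_norm d N A = Sup {N (A *\<^sub>v x) | x. x \<in> carrier_vec d \<and> N x \<le> 1}"

text \<open>The linear map Lin (0-based block indices).\<close>
definition Lin :: "(nat \<Rightarrow> complex mat) \<Rightarrow> (nat \<Rightarrow> complex mat) \<Rightarrow> (nat \<Rightarrow> complex vec) \<Rightarrow> (nat \<Rightarrow> complex vec)" where
  "Lin L C x = (\<lambda>k. if k = 0 then L 0 *\<^sub>v x 0 else L k *\<^sub>v x k + C k *\<^sub>v x (k - 1))"

text \<open>The matrices D (0-based): D i j for j \<le> i.  C k is the coupling block C_{k,k-1}.\<close>
fun Dm :: "(nat \<Rightarrow> nat) \<Rightarrow> (nat \<Rightarrow> complex mat) \<Rightarrow> (nat \<Rightarrow> complex mat) \<Rightarrow> (nat \<Rightarrow> nat \<Rightarrow> complex)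
            \<Rightarrow> (nat \<Rightarrow> complex mat) \<Rightarrow> nat \<Rightarrow> nat \<Rightarrow> complex mat" where
  "Dm d L V lam C 0 j = 1\<^sub>m (d 0)"
| "Dm d L V lam C (Suc i) j =
     (if j = Suc i then 1\<^sub>m (d (Suc i))
      else inv_m (L (Suc i)) * V (Suc i) *
           Matrix.mat (d (Suc i)) (d j)
             (\<lambda>(l, m). (inv_m (V (Suc i)) * C (Suc i) * Dm d L V lam C i j * V j) $$ (l, m)
                        * inverse (1 - lam j m / lam (Suc i) l))
           * inv_m (V j))"

fun pert :: "(nat \<Rightarrow> nat) \<Rightarrow> (nat \<Rightarrow> complex mat) \<Rightarrow> (nat \<Rightarrow> complex mat) \<Rightarrow> (nat \<Rightarrow> nat \<Rightarrow> complex)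
            \<Rightarrow> (nat \<Rightarrow> complex mat) \<Rightarrow> nat \<Rightarrow> (nat \<Rightarrow> complex vec) \<Rightarrow> complex vec" where
  "pert d L V lam C 0 x = x 0"
| "pert d L V lam C (Suc i) x =
     x (Suc i) +
     foldr (+) (map (\<lambda>j. ((-1) ^ (i - j)) \<cdot>\<^sub>v (Dm d L V lam C (Suc i) j *\<^sub>v pert d L V lam C j x))
                 [0..<Suc i]) (0\<^sub>v (d (Suc i)))"

definition Psi :: "(nat \<Rightarrow> complex mat) \<Rightarrow> nat \<Rightarrow> nat \<Rightarrow> (nat \<Rightarrow> complex vec) \<Rightarrow> complex" where
  "Psi V i s x = (inv_m (V i) *\<^sub>v x i) $ s"

end

theory Submission
  imports Defs
begin

(* The entries of D (i+1) j are chosen so that D (i+1) j solves the Sylvester equation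
   L_(i+1) D_(i+1,j) - D_(i+1,j) L_j = C_(i+1,i) D_(i,j); in the eigenbases of L_(i+1) and L_j
   this equation is diagonal, and it is solvable because the spectra are disjoint.
   Since D k k is the identity, the recursion defining pert can be inverted:
   x_k = sum_(j<=k) (-1)^(k-j) D_(k,j) pert_j(x).  Substituting Lin x into the recursion and using
   the Sylvester equations, the coupling terms C_(k,k-1) x_(k-1) cancel against this alternating
   sum, so that pert_k(Lin x) = L_k pert_k(x) by strong induction on k: pert conjugates Lin to its
   block diagonal part.  The claim then follows from psi_(i,s)(L_i y) = lambda_(i,s) psi_(i,s)(y). *)

lemma inv_m_inverse:
  fixes A :: "complex mat"
  assumes A: "A \<in> carrier_mat n n" and "invertible_mat A"
  shows "inv_m A \<in> carrier_mat n n" "A * inv_m A = 1\<^sub>m n" "inv_m A * A = 1\<^sub>m n"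
proof -
  obtain B where AB: "A * B = 1\<^sub>m n" and BA: "B * A = 1\<^sub>m (dim_row B)"
    using assms unfolding invertible_mat_def inverts_mat_def by auto
  have B: "B \<in> carrier_mat n n"
    using arg_cong[OF AB, of dim_col] arg_cong[OF BA, of dim_col] A by auto
  have "A \<in> Units (ring_mat TYPE(complex) n ())"
    using A B AB BA by (auto simp: Units_def ring_mat_def)
  then obtain C where "mat_inverse A = Some C"
    using mat_inverse(1)[OF A] by fastforce
  with mat_inverse(2)[OF A]
  show "inv_m A \<in> carrier_mat n n" "A * inv_m A = 1\<^sub>m n" "inv_m A * A = 1\<^sub>m n"
    unfolding inv_m_def by auto
qed

lemma mult_mat_assoc:
  "dim_col A = dim_row B \<Longrightarrow> dim_col B = dim_row C \<Longrightarrow> A * B * C = A * (B * (C :: 'a :: semiring_0 mat))"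
  by (rule assoc_mult_mat[of A "dim_row A" "dim_col A" B "dim_col B" C "dim_col C"]) auto

lemma mult_mat_cancel_left:
  fixes A B C :: "'a :: semiring_1 mat"
  assumes "A * B = 1\<^sub>m n" and "dim_col A = dim_row B" and "dim_row C = n"
  shows "A * (B * C) = C"
proof -
  have "dim_col B = n" using arg_cong[OF assms(1), of dim_col] by simp
  then have "A * (B * C) = A * B * C" using assms(2,3) by (intro mult_mat_assoc[symmetric]) auto
  also have "\<dots> = C" using assms(1) left_mult_one_mat[of C n "dim_col C"] assms(3) by auto
  finally show ?thesis .
qed

lemma dim_mat_diag [simp]: "dim_row (mat_diag n f) = n" "dim_col (mat_diag n f) = n"
  by (simp_all add: mat_diag_def)

lemma mat_diag_mult_unit_vec:
  "l < n \<Longrightarrow> mat_diag n a *\<^sub>v unit_vec n l = a l \<cdot>\<^sub>v (unit_vec n l :: 'a :: comm_ring_1 vec)"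
  by (intro eq_vecI) (auto simp: mat_diag_def unit_vec_def scalar_prod_def sum.remove[of _ l])

lemma index_mat_diag_mult_vec:
  fixes v :: "'a :: semiring_1 vec"
  assumes "v \<in> carrier_vec n" and "l < n"
  shows "(mat_diag n a *\<^sub>v v) $ l = a l * v $ l"
proof -
  have "(mat_diag n a *\<^sub>v v) $ l = (\<Sum>i = 0..<n. (if l = i then a i else 0) * v $ i)"
    using assms by (simp add: mat_diag_def scalar_prod_def)
  also have "\<dots> = (\<Sum>i = 0..<n. if l = i then a i * v $ i else 0)"
    by (intro sum.cong) auto
  finally show ?thesis using assms(2) by simp
qed

lemma diagonalization_eigenvalue:
  fixes A P :: "complex mat"
  assumes A: "A \<in> carrier_mat n n" and P: "P \<in> carrier_mat n n" and "invertible_mat P"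
    and AP: "A * P = P * mat_diag n a" and l: "l < n"
  shows "a l \<in> spectrum A"
proof -
  let ?e = "unit_vec n l :: complex vec"
  let ?v = "P *\<^sub>v ?e"
  have "A *\<^sub>v ?v = (A * P) *\<^sub>v ?e"
    using A P by simp
  also have "\<dots> = P *\<^sub>v (mat_diag n a *\<^sub>v ?e)"
    unfolding AP by (rule assoc_mult_mat_vec[OF P mat_diag_dim unit_vec_carrier])
  also have "\<dots> = a l \<cdot>\<^sub>v ?v"
    using P l by (simp add: mat_diag_mult_unit_vec mult_mat_vec)
  finally have eig: "A *\<^sub>v ?v = a l \<cdot>\<^sub>v ?v" .
  have "inv_m P *\<^sub>v ?v = ?e"
    using inv_m_inverse[OF P \<open>invertible_mat P\<close>] P by (simp add: assoc_mult_mat_vec[symmetric])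
  moreover have "?e \<noteq> 0\<^sub>v n"
    using l by (auto dest!: arg_cong[of _ _ "\<lambda>v. v $ l"])
  moreover have "inv_m P *\<^sub>v 0\<^sub>v n = 0\<^sub>v n"
    using inv_m_inverse(1)[OF P \<open>invertible_mat P\<close>] by auto
  ultimately have "?v \<noteq> 0\<^sub>v n"
    by metis
  with eig show ?thesis
    using A P unfolding spectrum_def eigenvalue_def eigenvector_def by (auto intro!: exI[of _ ?v])
qed

lemma zero_notin_spectrum:
  fixes A :: "complex mat"
  assumes A: "A \<in> carrier_mat n n" and "invertible_mat A"
  shows "0 \<notin> spectrum A"
proof
  assume "0 \<in> spectrum A"
  then obtain v where v: "v \<in> carrier_vec n" "v \<noteq> 0\<^sub>v n" and "A *\<^sub>v v = 0 \<cdot>\<^sub>v v"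
    using A unfolding spectrum_def eigenvalue_def eigenvector_def by auto
  then have "A *\<^sub>v v = 0\<^sub>v n" by auto
  then have "inv_m A *\<^sub>v (A *\<^sub>v v) = 0\<^sub>v n"
    using inv_m_inverse(1)[OF assms] by auto
  then show False
    using inv_m_inverse[OF assms] A v by (simp add: assoc_mult_mat_vec[symmetric])
qed

lemma inv_m_mult_diagonalization:
  fixes A P :: "complex mat"
  assumes A: "A \<in> carrier_mat n n" and P: "P \<in> carrier_mat n n" and "invertible_mat P"
    and AP: "A * P = P * mat_diag n a"
  shows "inv_m P * A = mat_diag n a * inv_m P"
proof -
  note P' = inv_m_inverse[OF P \<open>invertible_mat P\<close>]
  have "inv_m P * A = inv_m P * (A * (P * inv_m P))"
    using A P' by simp
  also have "\<dots> = inv_m P * ((A * P) * inv_m P)"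
    using A P P' by (simp add: mult_mat_assoc)
  also have "\<dots> = inv_m P * (P * (mat_diag n a * inv_m P))"
    unfolding AP using assoc_mult_mat[OF P mat_diag_dim P'(1)] by simp
  also have "\<dots> = mat_diag n a * inv_m P"
    using P P' by (intro mult_mat_cancel_left) auto
  finally show ?thesis .
qed

lemma principal_eigenfunction:
  fixes A P :: "complex mat"
  assumes A: "A \<in> carrier_mat n n" and P: "P \<in> carrier_mat n n" and "invertible_mat P"
    and AP: "A * P = P * mat_diag n a" and v: "v \<in> carrier_vec n" and s: "s < n"
  shows "(inv_m P *\<^sub>v (A *\<^sub>v v)) $ s = a s * (inv_m P *\<^sub>v v) $ s"
proof -
  note P' = inv_m_inverse(1)[OF P \<open>invertible_mat P\<close>]
  have "inv_m P *\<^sub>v (A *\<^sub>v v) = mat_diag n a *\<^sub>v (inv_m P *\<^sub>v v)"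
    using inv_m_mult_diagonalization[OF A P \<open>invertible_mat P\<close> AP]
      assoc_mult_mat_vec[OF P' A v] assoc_mult_mat_vec[OF mat_diag_dim P' v] by simp
  also have "\<dots> $ s = a s * (inv_m P *\<^sub>v v) $ s"
    by (rule index_mat_diag_mult_vec) (use P' v s in auto)
  finally show ?thesis .
qed

lemma mat_diag_sylvester:
  fixes M :: "complex mat"
  assumes M: "M \<in> carrier_mat p q"
    and nz: "\<And>l. l < p \<Longrightarrow> a l \<noteq> 0" and ne: "\<And>l m. l < p \<Longrightarrow> m < q \<Longrightarrow> a l \<noteq> b m"
  defines "T \<equiv> mat p q (\<lambda>(l, m). M $$ (l, m) * inverse (1 - b m / a l))"
  shows "mat_diag p a * T - T * mat_diag q b = mat_diag p a * M"
proof -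
  have T: "T \<in> carrier_mat p q" by (simp add: T_def)
  have "mat_diag p a * T - T * mat_diag q b
      = mat p q (\<lambda>(l, m). a l * T $$ (l, m)) - mat p q (\<lambda>(l, m). T $$ (l, m) * b m)"
    by (simp add: mat_diag_mult_left[OF T] mat_diag_mult_right[OF T])
  also have "\<dots> = mat p q (\<lambda>(l, m). a l * M $$ (l, m))"
  proof (rule eq_matI)
    fix l m assume "l < dim_row (mat p q (\<lambda>(l, m). a l * M $$ (l, m)))"
      and "m < dim_col (mat p q (\<lambda>(l, m). a l * M $$ (l, m)))"
    then have l: "l < p" and m: "m < q" by auto
    have "a l - b m \<noteq> 0" using ne[OF l m] by simp
    moreover have "T $$ (l, m) = a l * M $$ (l, m) / (a l - b m)"
      using l m nz[OF l] by (simp add: T_def field_simps)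
    ultimately show "(mat p q (\<lambda>(l, m). a l * T $$ (l, m)) - mat p q (\<lambda>(l, m). T $$ (l, m) * b m)) $$ (l, m)
        = mat p q (\<lambda>(l, m). a l * M $$ (l, m)) $$ (l, m)"
      using l m by (simp add: field_simps)
  qed auto
  also have "\<dots> = mat_diag p a * M" by (simp add: mat_diag_mult_left[OF M])
  finally show ?thesis .
qed

(* Writing X = P Y (inv_m Q), the equation becomes (a l - b m) Y_lm = M_lm with M = inv_m P R Q.
   As inv_m A P = P (mat_diag p a)^-1, the defining formula has Y_lm = T_lm / a l, whence the
   factor inverse (1 - b m / a l) = a l / (a l - b m). *)
lemma sylvester_solution:
  fixes A B P Q R :: "complex mat"
  assumes A: "A \<in> carrier_mat p p" and B: "B \<in> carrier_mat q q"
    and P: "P \<in> carrier_mat p p" and Q: "Q \<in> carrier_mat q q" and R: "R \<in> carrier_mat p q"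
    and invA: "invertible_mat A" and invP: "invertible_mat P" and invQ: "invertible_mat Q"
    and AP: "A * P = P * mat_diag p a" and BQ: "B * Q = Q * mat_diag q b"
    and disj: "spectrum A \<inter> spectrum B = {}"
  defines "X \<equiv> inv_m A * P * mat p q (\<lambda>(l, m). (inv_m P * R * Q) $$ (l, m) * inverse (1 - b m / a l)) * inv_m Q"
  shows "A * X - X * B = R"
proof -
  define M where "M = inv_m P * R * Q"
  define T where "T = mat p q (\<lambda>(l, m). M $$ (l, m) * inverse (1 - b m / a l))"
  note A' = inv_m_inverse[OF A invA] and P' = inv_m_inverse[OF P invP] and Q' = inv_m_inverse[OF Q invQ]
  have M: "M \<in> carrier_mat p q" using P'(1) R Q by (simp add: M_def)
  have T: "T \<in> carrier_mat p q" by (simp add: T_def)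
  note dims = carrier_matD[OF A] carrier_matD[OF B] carrier_matD[OF P] carrier_matD[OF Q]
    carrier_matD[OF R] carrier_matD[OF M] carrier_matD[OF T]
    carrier_matD[OF A'(1)] carrier_matD[OF P'(1)] carrier_matD[OF Q'(1)]
  have eig_A: "a l \<in> spectrum A" if "l < p" for l
    using diagonalization_eigenvalue[OF A P invP AP that] .
  have eig_B: "b m \<in> spectrum B" if "m < q" for m
    using diagonalization_eigenvalue[OF B Q invQ BQ that] .
  have diag_eq: "mat_diag p a * T - T * mat_diag q b = mat_diag p a * M"
    unfolding T_def using M
  proof (rule mat_diag_sylvester)
    show "a l \<noteq> 0" if "l < p" for l
      using eig_A[OF that] zero_notin_spectrum[OF A invA] by auto
    show "a l \<noteq> b m" if "l < p" "m < q" for l m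
      using eig_A[OF that(1)] eig_B[OF that(2)] disj by auto
  qed
  have cancel_A: "inv_m A * (A * Y) = Y" if "dim_row Y = p" for Y
    using A'(3) dims that by (intro mult_mat_cancel_left) auto
  have "A * X = inv_m A * (A * (P * (T * inv_m Q)))"
    unfolding X_def T_def[symmetric] M_def[symmetric]
    using dims by (simp add: mult_mat_assoc mult_mat_cancel_left[OF A'(2)] cancel_A)
  also have "\<dots> = inv_m A * (P * (mat_diag p a * T * inv_m Q))"
    using AP dims by (simp add: mult_mat_assoc[symmetric])
  finally have AX: "A * X = inv_m A * (P * (mat_diag p a * T * inv_m Q))" .
  have "X * B = inv_m A * (P * (T * (inv_m Q * B)))"
    unfolding X_def T_def[symmetric] M_def[symmetric] using dims by (simp add: mult_mat_assoc)
  also have "inv_m Q * B = mat_diag q b * inv_m Q"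
    by (rule inv_m_mult_diagonalization[OF B Q invQ BQ])
  finally have XB: "X * B = inv_m A * (P * (T * mat_diag q b * inv_m Q))"
    using dims by (simp add: mult_mat_assoc)
  have DT: "mat_diag p a * T \<in> carrier_mat p q" and TD: "T * mat_diag q b \<in> carrier_mat p q"
    using T by auto
  have "A * X - X * B = inv_m A * (P * ((mat_diag p a * T - T * mat_diag q b) * inv_m Q))"
    unfolding AX XB minus_mult_distrib_mat[OF DT TD Q'(1)]
    using A'(1) P DT TD Q'(1)
    by (simp add: mult_minus_distrib_mat[of _ p p _ q])
  also have "\<dots> = inv_m A * (A * (P * (M * inv_m Q)))"
    unfolding diag_eq using AP dims by (simp add: mult_mat_assoc[symmetric])
  also have "\<dots> = (P * inv_m P) * R * (Q * inv_m Q)"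
    unfolding M_def using dims by (simp add: mult_mat_assoc cancel_A)
  also have "\<dots> = R"
    using P'(2) Q'(2) R by simp
  finally show ?thesis .
qed

lemma foldr_add_carrier:
  "\<forall>v \<in> set vs. v \<in> carrier_vec r \<Longrightarrow> foldr (+) vs (0\<^sub>v r) \<in> carrier_vec r"
  by (induction vs) auto

lemma index_mult_mat_vec_foldr_add:
  fixes A :: "'a :: comm_ring_1 mat"
  assumes A: "A \<in> carrier_mat r c" and vs: "\<forall>v \<in> set vs. v \<in> carrier_vec c" and t: "t < r"
  shows "(A *\<^sub>v foldr (+) vs (0\<^sub>v c)) $ t = (\<Sum>v\<leftarrow>vs. (A *\<^sub>v v) $ t)"
  using vs
proof (induction vs)
  case Nil
  then show ?case using A t by auto
next
  case (Cons v vs)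
  then have "foldr (+) vs (0\<^sub>v c) \<in> carrier_vec c" by (intro foldr_add_carrier) auto
  with Cons A t show ?case by (simp add: mult_add_distrib_mat_vec)
qed

lemma index_mult_mat_vec_linear_combination:
  fixes A :: "'a :: field mat"
  assumes A: "A \<in> carrier_mat r c" and w: "\<And>j. j < m \<Longrightarrow> w j \<in> carrier_vec c" and t: "t < r"
  shows "(A *\<^sub>v foldr (+) (map (\<lambda>j. a j \<cdot>\<^sub>v w j) [0..<m]) (0\<^sub>v c)) $ t
       = (\<Sum>j<m. a j * (A *\<^sub>v w j) $ t)"
proof -
  have "(A *\<^sub>v foldr (+) (map (\<lambda>j. a j \<cdot>\<^sub>v w j) [0..<m]) (0\<^sub>v c)) $ t
      = (\<Sum>j\<leftarrow>[0..<m]. (A *\<^sub>v (a j \<cdot>\<^sub>v w j)) $ t)"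
    using w by (subst index_mult_mat_vec_foldr_add[OF A _ t]) (auto simp: comp_def)
  also have "\<dots> = (\<Sum>j<m. (A *\<^sub>v (a j \<cdot>\<^sub>v w j)) $ t)"
    by (simp add: interv_sum_list_conv_sum_set_nat atLeast0LessThan)
  also have "\<dots> = (\<Sum>j<m. a j * (A *\<^sub>v w j) $ t)"
    using A t w by (intro sum.cong refl) (simp add: mult_mat_vec[OF A])
  finally show ?thesis .
qed

declare Dm.simps(2) [simp del] pert.simps(2) [simp del]

locale bidiagonal_block_system =
  fixes n :: nat and d :: "nat \<Rightarrow> nat"
    and L V C :: "nat \<Rightarrow> complex mat" and lam :: "nat \<Rightarrow> nat \<Rightarrow> complex"
  assumes L_carrier: "k < n \<Longrightarrow> L k \<in> carrier_mat (d k) (d k)"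
    and C_carrier: "Suc k < n \<Longrightarrow> C (Suc k) \<in> carrier_mat (d (Suc k)) (d k)"
    and V_carrier: "k < n \<Longrightarrow> V k \<in> carrier_mat (d k) (d k)"
    and L_invertible: "k < n \<Longrightarrow> invertible_mat (L k)"
    and V_invertible: "k < n \<Longrightarrow> invertible_mat (V k)"
    and L_V: "k < n \<Longrightarrow> L k * V k = V k * mat_diag (d k) (lam k)"
    and spectra_disjoint:
      "k < n \<Longrightarrow> l < n \<Longrightarrow> k \<noteq> l \<Longrightarrow> spectrum (L k) \<inter> spectrum (L l) = {}"
begin

abbreviation "D \<equiv> Dm d L V lam C"
abbreviation "Pert \<equiv> pert d L V lam C"

lemma D_diag: "D k k = 1\<^sub>m (d k)"
  by (cases k) (simp_all add: Dm.simps)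

lemma D_Suc: "j \<le> i \<Longrightarrow> D (Suc i) j = inv_m (L (Suc i)) * V (Suc i) *
    mat (d (Suc i)) (d j) (\<lambda>(l, m). (inv_m (V (Suc i)) * C (Suc i) * D i j * V j) $$ (l, m)
      * inverse (1 - lam j m / lam (Suc i) l)) * inv_m (V j)"
  by (simp add: Dm.simps)

lemma D_carrier: "i < n \<Longrightarrow> j \<le> i \<Longrightarrow> D i j \<in> carrier_mat (d i) (d j)"
proof (induction i)
  case 0
  then show ?case by simp
next
  case (Suc i)
  show ?case
  proof (cases "j = Suc i")
    case False
    then have j: "j < n" "j \<le> i" using Suc.prems by auto
    show ?thesis
      unfolding D_Suc[OF j(2)]
      by (rule mult_carrier_mat[OF mult_carrier_mat[OF mult_carrier_mat[OF
            inv_m_inverse(1)[OF L_carrier L_invertible] V_carrier] mat_carrier]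
            inv_m_inverse(1)[OF V_carrier V_invertible]])
        (use Suc.prems j in auto)
  qed (simp add: D_diag)
qed

lemma D_sylvester:
  assumes i: "Suc i < n" and j: "j \<le> i"
  shows "L (Suc i) * D (Suc i) j - D (Suc i) j * L j = C (Suc i) * D i j"
proof -
  have jn: "j < n" using i j by simp
  have "inv_m (V (Suc i)) * C (Suc i) * D i j * V j = inv_m (V (Suc i)) * (C (Suc i) * D i j) * V j"
    using inv_m_inverse(1)[OF V_carrier V_invertible, OF i] C_carrier[OF i] D_carrier[of i j] i j
    by (simp add: mult_mat_assoc)
  then show ?thesis
    unfolding D_Suc[OF j]
    using sylvester_solution[OF L_carrier[OF i] L_carrier[OF jn] V_carrier[OF i] V_carrier[OF jn]
        _ L_invertible[OF i] V_invertible[OF i] V_invertible[OF jn] L_V[OF i] L_V[OF jn]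
        spectra_disjoint[OF i jn]]
      C_carrier[OF i] D_carrier[of i j] i j
    by auto
qed

lemma Pert_carrier:
  assumes x: "\<And>k. k < n \<Longrightarrow> x k \<in> carrier_vec (d k)"
  shows "k < n \<Longrightarrow> Pert k x \<in> carrier_vec (d k)"
proof (induction k rule: less_induct)
  case (less k)
  show ?case
  proof (cases k)
    case (Suc i)
    have "D (Suc i) j *\<^sub>v Pert j x \<in> carrier_vec (d (Suc i))" if "j \<le> i" for j
      using D_carrier[of "Suc i" j] less.IH[of j] less.prems Suc that by simp
    then have "foldr (+) (map (\<lambda>j. (-1) ^ (i - j) \<cdot>\<^sub>v (D (Suc i) j *\<^sub>v Pert j x)) [0..<Suc i])
        (0\<^sub>v (d (Suc i))) \<in> carrier_vec (d (Suc i))"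
      by (intro foldr_add_carrier) auto
    then show ?thesis
      using x less.prems Suc by (simp add: pert.simps)
  qed (use x less.prems in simp)
qed

lemma D_mult_Pert_carrier:
  assumes x: "\<And>k. k < n \<Longrightarrow> x k \<in> carrier_vec (d k)" and "k < n" and "j \<le> k"
  shows "D k j *\<^sub>v Pert j x \<in> carrier_vec (d k)"
  using D_carrier[of k j] Pert_carrier[OF x, of j] assms(2,3) by simp

lemma index_mult_Pert_Suc:
  assumes x: "\<And>k. k < n \<Longrightarrow> x k \<in> carrier_vec (d k)" and k: "Suc k < n"
    and A: "A \<in> carrier_mat r (d (Suc k))" and t: "t < r"
  shows "(A *\<^sub>v Pert (Suc k) x) $ t
       = (A *\<^sub>v x (Suc k)) $ t + (\<Sum>j<Suc k. (-1) ^ (k - j) * (A *\<^sub>v (D (Suc k) j *\<^sub>v Pert j x)) $ t)"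
proof -
  let ?F = "foldr (+) (map (\<lambda>j. (-1) ^ (k - j) \<cdot>\<^sub>v (D (Suc k) j *\<^sub>v Pert j x)) [0..<Suc k])
    (0\<^sub>v (d (Suc k)))"
  have summands: "D (Suc k) j *\<^sub>v Pert j x \<in> carrier_vec (d (Suc k))" if "j < Suc k" for j
    using D_mult_Pert_carrier[OF x k] that by simp
  then have "?F \<in> carrier_vec (d (Suc k))" by (intro foldr_add_carrier) auto
  then have "(A *\<^sub>v Pert (Suc k) x) $ t = (A *\<^sub>v x (Suc k)) $ t + (A *\<^sub>v ?F) $ t"
    using A x k t by (simp add: pert.simps mult_add_distrib_mat_vec del: upt_Suc)
  also have "(A *\<^sub>v ?F) $ t = (\<Sum>j<Suc k. (-1) ^ (k - j) * (A *\<^sub>v (D (Suc k) j *\<^sub>v Pert j x)) $ t)"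
    by (rule index_mult_mat_vec_linear_combination[OF A summands t])
  finally show ?thesis .
qed

lemma index_mult_alternating_sum_Pert:
  assumes x: "\<And>k. k < n \<Longrightarrow> x k \<in> carrier_vec (d k)" and k: "k < n"
    and A: "A \<in> carrier_mat r (d k)" and t: "t < r"
  shows "(A *\<^sub>v x k) $ t = (\<Sum>j<Suc k. (-1) ^ (k - j) * (A *\<^sub>v (D k j *\<^sub>v Pert j x)) $ t)"
proof (cases k)
  case 0
  then show ?thesis using x k by (simp add: carrier_vecD)
next
  case (Suc i)
  have Pk: "Pert k x \<in> carrier_vec (d k)" using Pert_carrier[OF x k] .
  have "(\<Sum>j<Suc k. (-1) ^ (k - j) * (A *\<^sub>v (D k j *\<^sub>v Pert j x)) $ t)
      = (A *\<^sub>v Pert k x) $ t - (\<Sum>j<Suc i. (-1) ^ (i - j) * (A *\<^sub>v (D k j *\<^sub>v Pert j x)) $ t)"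
    using Pk by (simp add: D_diag Suc Suc_diff_le sum_negf[symmetric])
  also have "\<dots> = (A *\<^sub>v x k) $ t"
    using index_mult_Pert_Suc[OF x _ _ t, of i] k A Suc by simp
  finally show ?thesis ..
qed

lemma index_D_mult_L:
  assumes i: "Suc i < n" and j: "j \<le> i" and v: "v \<in> carrier_vec (d j)" and t: "t < d (Suc i)"
  shows "(D (Suc i) j *\<^sub>v (L j *\<^sub>v v)) $ t
       = (L (Suc i) *\<^sub>v (D (Suc i) j *\<^sub>v v)) $ t - (C (Suc i) *\<^sub>v (D i j *\<^sub>v v)) $ t"
proof -
  have jn: "j < n" using i j by simp
  note carriers = L_carrier[OF i] L_carrier[OF jn] C_carrier[OF i] D_carrier[OF i, of j] D_carrier[of i j]
  have "(C (Suc i) *\<^sub>v (D i j *\<^sub>v v)) $ t = ((L (Suc i) * D (Suc i) j - D (Suc i) j * L j) *\<^sub>v v) $ t"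
    using D_sylvester[OF i j] carriers i j v by simp
  also have "\<dots> = (L (Suc i) *\<^sub>v (D (Suc i) j *\<^sub>v v)) $ t - (D (Suc i) j *\<^sub>v (L j *\<^sub>v v)) $ t"
    using carriers i j v t by (simp add: minus_mult_distrib_mat_vec[of _ "d (Suc i)" "d j"])
  finally show ?thesis by simp
qed

lemma Lin_carrier:
  assumes x: "\<And>k. k < n \<Longrightarrow> x k \<in> carrier_vec (d k)" and k: "k < n"
  shows "Lin L C x k \<in> carrier_vec (d k)"
  using x k L_carrier[OF k] C_carrier[of "k - 1"] by (cases k) (auto simp: Lin_def)

lemma Pert_Lin:
  assumes x: "\<And>k. k < n \<Longrightarrow> x k \<in> carrier_vec (d k)"
  shows "k < n \<Longrightarrow> Pert k (Lin L C x) = L k *\<^sub>v Pert k x"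
proof (induction k rule: less_induct)
  case (less k)
  show ?case
  proof (cases k)
    case 0
    then show ?thesis by (simp add: Lin_def)
  next
    case (Suc i)
    define y where "y = Lin L C x"
    have y: "\<And>k. k < n \<Longrightarrow> y k \<in> carrier_vec (d k)"
      unfolding y_def by (rule Lin_carrier[OF x])
    have k: "Suc i < n" using less.prems Suc by simp
    note carriers = L_carrier[OF k] C_carrier[OF k] x[OF k] x[of i] Pert_carrier[OF x k]
    let ?P = "\<lambda>j. Pert j x"
    let ?s = "\<lambda>j. (-1 :: complex) ^ (i - j)"
    show ?thesis
      unfolding Suc y_def[symmetric]
    proof (rule eq_vecI)
      fix t assume "t < dim_vec (L (Suc i) *\<^sub>v Pert (Suc i) x)"
      then have t: "t < d (Suc i)" using carriers by simp
      have "Pert (Suc i) y $ t = y (Suc i) $ t + (\<Sum>j<Suc i. ?s j * (D (Suc i) j *\<^sub>v Pert j y) $ t)"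
        using index_mult_Pert_Suc[OF y k one_carrier_mat t] y[OF k] Pert_carrier[OF y k]
          D_mult_Pert_carrier[OF y k] by simp
      also have "\<dots> = (L (Suc i) *\<^sub>v x (Suc i)) $ t + (C (Suc i) *\<^sub>v x i) $ t
          + (\<Sum>j<Suc i. ?s j * ((L (Suc i) *\<^sub>v (D (Suc i) j *\<^sub>v ?P j)) $ t
                                - (C (Suc i) *\<^sub>v (D i j *\<^sub>v ?P j)) $ t))"
        using less.IH[unfolded Suc] k carriers t Pert_carrier[OF x, of i]
        by (auto simp: y_def Lin_def index_D_mult_L Pert_carrier[OF x] intro!: sum.cong)
      also have "\<dots> = (L (Suc i) *\<^sub>v Pert (Suc i) x) $ t"
        using index_mult_Pert_Suc[OF x k L_carrier[OF k] t]
          index_mult_alternating_sum_Pert[OF x _ C_carrier[OF k] t] k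
        by (simp add: right_diff_distrib sum_subtractf)
      finally show "Pert (Suc i) y $ t = (L (Suc i) *\<^sub>v Pert (Suc i) x) $ t" .
    qed (use Pert_carrier[OF y k] carriers in simp)
  qed
qed

end

theorem corollary2:
  fixes n :: nat and d :: "nat \<Rightarrow> nat"
    and L V C :: "nat \<Rightarrow> complex mat" and lam :: "nat \<Rightarrow> nat \<Rightarrow> complex"
    and N :: "nat \<Rightarrow> complex vec \<Rightarrow> real"
    and i s :: nat and x :: "nat \<Rightarrow> complex vec"
  assumes n_pos: "n \<ge> 1"
    and d_pos: "\<forall>k<n. d k \<ge> 1"
    and norms: "\<forall>k<n. is_vec_norm (d k) (N k)"
    and L_dim: "\<forall>k<n. L k \<in> carrier_mat (d k) (d k)"
    and C_dim: "\<forall>k<n. k \<ge> 1 \<longrightarrow> C k \<in> carrier_mat (d k) (d (k - 1))"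
    and V_dim: "\<forall>k<n. V k \<in> carrier_mat (d k) (d k)"
    and L_inv: "\<forall>k<n. invertible_mat (L k)"
    and V_inv: "\<forall>k<n. invertible_mat (V k)"
    and eig: "\<forall>k<n. L k * V k = V k * mat_diag (d k) (lam k)"
    and disj: "\<forall>k<n. \<forall>l<n. k \<noteq> l \<longrightarrow> spectrum (L k) \<inter> spectrum (L l) = {}"
    and norm_mono: "\<forall>k. k + 1 < n \<longrightarrow> op_norm (d k) (N k) (L k) < op_norm (d (k + 1)) (N (k + 1)) (L (k + 1))"
    and norm_le1: "op_norm (d (n - 1)) (N (n - 1)) (L (n - 1)) \<le> 1"
    and i_lt: "i < n"
    and s_lt: "s < d i"
    and x_dim: "\<forall>k<n. x k \<in> carrier_vec (d k)"
  shows "Psi V i s (\<lambda>k. pert d L V lam C k (Lin L C x))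
         = lam i s * Psi V i s (\<lambda>k. pert d L V lam C k x)"
proof -
  interpret bidiagonal_block_system n d L V C lam
    using L_dim C_dim V_dim L_inv V_inv eig disj by unfold_locales auto
  have x: "\<And>k. k < n \<Longrightarrow> x k \<in> carrier_vec (d k)" using x_dim by simp
  have "(inv_m (V i) *\<^sub>v (L i *\<^sub>v Pert i x)) $ s = lam i s * (inv_m (V i) *\<^sub>v Pert i x) $ s"
    by (rule principal_eigenfunction[OF L_carrier V_carrier V_invertible L_V Pert_carrier[OF x]])
      (use i_lt s_lt in auto)
  then show ?thesis
    by (simp add: Psi_def Pert_Lin[OF x i_lt])
qed

end
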